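(* Let $m\ge0$, $n\ge1$ and let $s_1,\dots,s_n\in\mathbb Z$ with $\sum_{i=1}^n s_i=0$. Then $y_{1^{m+1}0}^{s_1}y_{1^{m+2}0}^{s_2}\cdots y_{1^{m+n}0}^{s_n}\in S$.
   Context: Let $\{0,1\}^{\mathbb N}$ be the Cantor set of infinite binary sequences and $\{0,1\}^{<\mathbb N}$ the set of finite binary words, including the empty word; juxtaposition denotes concatenation, $0^n,1^n$ denote constant words. Homeomorphisms act on the right. Define $x,y$ by $00\eta\cdot x=0\eta$, $01\eta\cdot x=10\eta$, $1\eta\cdot x=11\eta$, and recursively $00\eta\cdot y=0(\eta\cdot y)$, $01\eta\cdot y=10(\eta\cdot y^{-1})$, $1\eta\cdot y=11(\eta\cdot y)$; $x_s$ (resp. $y_s$) sends $s\eta\mapsto s(\eta\cdot x)$ (resp. $s(\eta\cdot y)$) and fixes sequences not beginning with $s$. For $n\ge0$, $p_n$ is the homeomorphism with $1^k0\eta\cdot p_n=1^{k+1}0\eta$ for $0\le k\le n-1$, $1^n0\eta\cdot p_n=1^{n+1}\eta$, and $1^{n+1}\eta\cdot p_n=0\eta$. $T$ is the group generated by all $x_s$ and all $p_n$, and $S=\langle T,\ y_{10}y_{110}^{-1}\rangle$. *)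

theory Defs
  imports Main
begin

text \<open>Points of the Cantor set are infinite binary sequences, modelled as
  functions nat => bool (False = 0, True = 1).
  Homeomorphisms act on the right; we model them as ordinary functions,
  so the right-action product g h (first g, then h) is the composition h o g.\<close>

type_synonym cseq = "nat \<Rightarrow> bool"
type_synonym homeo = "cseq \<Rightarrow> cseq"

definition prepend :: "bool list \<Rightarrow> cseq \<Rightarrow> cseq" (infixr "@@" 65) where
  "w @@ \<eta> = (\<lambda>i. if i < length w then w ! i else \<eta> (i - length w))"

definition sdrop :: "nat \<Rightarrow> cseq \<Rightarrow> cseq" where
  "sdrop k \<eta> = (\<lambda>i. \<eta> (i + k))"

definition has_prefix :: "bool list \<Rightarrow> cseq \<Rightarrow> bool" where
  "has_prefix w \<eta> \<longleftrightarrow> map \<eta> [0..<length w] = w"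

definition xmap :: homeo where
  "xmap \<eta> =
     (if \<not> \<eta> 0 \<and> \<not> \<eta> 1 then [False] @@ sdrop 2 \<eta>
      else if \<not> \<eta> 0 \<and> \<eta> 1 then [True, False] @@ sdrop 2 \<eta>
      else [True, True] @@ sdrop 1 \<eta>)"

text \<open>The recursive map y (and y^-1) is realised by a finite-state transducer on
  finite words: flag False computes y, flag True computes y^-1.  Its defining
  equations are exactly the recursive equations of y and of y^-1
  (0xi.y^-1 = 00(xi.y^-1), 10xi.y^-1 = 01(xi.y), 11xi.y^-1 = 1(xi.y^-1)).
  An incomplete final block produces no output.\<close>
fun ytr :: "bool \<Rightarrow> bool list \<Rightarrow> bool list" where
  "ytr False (False # False # w) = False # ytr False w"
| "ytr False (False # True # w) = True # False # ytr True w"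
| "ytr False (True # w) = True # True # ytr False w"
| "ytr False _ = []"
| "ytr True (False # w) = False # False # ytr True w"
| "ytr True (True # False # w) = False # True # ytr False w"
| "ytr True (True # True # w) = True # ytr True w"
| "ytr True _ = []"

text \<open>Each step consumes at most 2 input letters and emits at least 1, so the
  image of a prefix of length 2n+3 determines the n-th output letter.\<close>
definition ymap :: homeo where
  "ymap \<eta> = (\<lambda>n. ytr False (map \<eta> [0..<2 * n + 3]) ! n)"

definition x_at :: "bool list \<Rightarrow> homeo" where
  "x_at s \<eta> = (if has_prefix s \<eta> then s @@ xmap (sdrop (length s) \<eta>) else \<eta>)"

definition y_at :: "bool list \<Rightarrow> homeo" where
  "y_at s \<eta> = (if has_prefix s \<eta> then s @@ ymap (sdrop (length s) \<eta>) else \<eta>)"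

definition p_map :: "nat \<Rightarrow> homeo" where
  "p_map n \<eta> =
     (if has_prefix (replicate (n + 1) True) \<eta> then [False] @@ sdrop (n + 1) \<eta>
      else (let k = (LEAST k. \<not> \<eta> k) in
            if k < n then (replicate (k + 1) True @ [False]) @@ sdrop (k + 1) \<eta>
            else replicate (n + 1) True @@ sdrop (n + 1) \<eta>))"

inductive_set gen_group :: "homeo set \<Rightarrow> homeo set" for G :: "homeo set" where
  gen: "g \<in> G \<Longrightarrow> g \<in> gen_group G"
| one: "id \<in> gen_group G"
| mult: "g \<in> gen_group G \<Longrightarrow> h \<in> gen_group G \<Longrightarrow> h \<circ> g \<in> gen_group G"
| inverse: "g \<in> gen_group G \<Longrightarrow> inv g \<in> gen_group G"

definition T_group :: "homeo set" where
  "T_group = gen_group (range x_at \<union> range p_map)"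

text \<open>S = < T, y_10 y_110^-1 >; with right actions, y_10 y_110^-1 is inv(y_110) o y_10.\<close>
definition S_group :: "homeo set" where
  "S_group = gen_group (T_group \<union> {inv (y_at [True, True, False]) \<circ> y_at [True, False]})"

definition zpow :: "homeo \<Rightarrow> int \<Rightarrow> homeo" where
  "zpow g k = (if 0 \<le> k then g ^^ nat k else inv g ^^ nat (- k))"

text \<open>Right-action product g_1 g_2 ... g_n (apply g_1 first) = g_n o ... o g_1.\<close>
definition rprod :: "homeo list \<Rightarrow> homeo" where
  "rprod gs = foldl (\<lambda>acc g. g \<circ> acc) id gs"

end

theory Submission
  imports Defs
begin

text \<open>Write \<open>Y\<^sub>j\<close> for \<open>y\<^bsub>1\<^sup>j0\<^esub>\<close>. These maps have pairwise disjoint supports, so they commute,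
  and conjugating by \<open>x\<^sup>k\<close> turns the generator \<open>y\<^sub>1\<^sub>0 y\<^sub>1\<^sub>1\<^sub>0\<^sup>-\<^sup>1 = Y\<^sub>1 Y\<^sub>2\<^sup>-\<^sup>1\<close> into
  \<open>Y\<^bsub>k+1\<^esub> Y\<^bsub>k+2\<^esub>\<^sup>-\<^sup>1\<close>, because \<open>x\<^sup>k\<close> maps \<open>1\<^sup>j0\<eta>\<close> to \<open>1\<^bsup>j+k\<^esup>0\<eta>\<close>. Hence all these
  quotients lie in \<open>S\<close>, and by commutativity
  \<open>Y\<^bsub>m+1\<^esub>\<^bsup>s\<^sub>1\<^esup> Y\<^bsub>m+2\<^esub>\<^bsup>s\<^sub>2\<^esup> \<cdots> = (Y\<^bsub>m+1\<^esub> Y\<^bsub>m+2\<^esub>\<^sup>-\<^sup>1)\<^bsup>s\<^sub>1\<^esup> \<cdot> Y\<^bsub>m+2\<^esub>\<^bsup>s\<^sub>1+s\<^sub>2\<^esup> Y\<^bsub>m+3\<^esub>\<^bsup>s\<^sub>3\<^esup> \<cdots>\<close>,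
  which reduces the number of factors while keeping the exponent sum zero.\<close>

lemma has_prefix_prepend: "has_prefix s (s @@ \<zeta>)"
  unfolding has_prefix_def prepend_def by (rule nth_equalityI) auto

lemma sdrop_prepend: "sdrop (length s) (s @@ \<zeta>) = \<zeta>"
  unfolding sdrop_def prepend_def by auto

lemma prepend_sdrop:
  assumes "has_prefix s \<eta>" shows "s @@ sdrop (length s) \<eta> = \<eta>"
proof
  fix i
  have "s ! i = map \<eta> [0..<length s] ! i"
    using assms unfolding has_prefix_def by simp
  then have "i < length s \<Longrightarrow> s ! i = \<eta> i" by simp
  then show "(s @@ sdrop (length s) \<eta>) i = \<eta> i"
    unfolding prepend_def sdrop_def by simp
qed

lemma has_prefix_ones_zero:
  "has_prefix (replicate i True @ [False]) \<eta> \<longleftrightarrow> (\<forall>k<i. \<eta> k) \<and> \<not> \<eta> i"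
proof -
  have "has_prefix (replicate i True @ [False]) \<eta> \<longleftrightarrow>
        (\<forall>k<Suc i. \<eta> k = (replicate i True @ [False]) ! k)"
    unfolding has_prefix_def list_eq_iff_nth_eq by (simp del: upt_Suc)
  also have "\<dots> \<longleftrightarrow> (\<forall>k<i. \<eta> k) \<and> \<not> \<eta> i"
    by (auto simp: nth_append less_Suc_eq)
  finally show ?thesis .
qed

section \<open>The transducer for \<open>y\<close> and \<open>y\<^sup>-\<^sup>1\<close>\<close>

lemma ytr_append: "\<exists>r. ytr b (w @ v) = ytr b w @ r"
  by (induction b w rule: ytr.induct) auto

lemma ytr_append_nth:
  assumes "j < length (ytr b w)" shows "ytr b (w @ v) ! j = ytr b w ! j"
proof -
  obtain r where "ytr b (w @ v) = ytr b w @ r" using ytr_append by blast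
  then show ?thesis using assms by (simp add: nth_append)
qed

lemma ytr_length: "length w \<le> 2 * length (ytr b w) + 1"
  by (induction b w rule: ytr.induct) auto

lemma ytr_inverse: "\<exists>r. w = ytr (\<not> b) (ytr b w) @ r"
  by (induction b w rule: ytr.induct) auto

definition ystream :: "bool \<Rightarrow> homeo" where
  "ystream b \<eta> = (\<lambda>n. ytr b (map \<eta> [0..<2 * n + 3]) ! n)"

lemma ymap_eq_ystream: "ymap = ystream False"
  unfolding ymap_def ystream_def ..

lemma map_upt_split: "K \<le> M \<Longrightarrow> map \<eta> [0..<M] = map \<eta> [0..<K] @ map \<eta> [K..<M]"
  by (metis le0 upt_add_eq_append le_add_diff_inverse map_append)

lemma ystream_nth:
  assumes "j < length (ytr b (map \<eta> [0..<K]))"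
  shows "ystream b \<eta> j = ytr b (map \<eta> [0..<K]) ! j"
proof -
  define M where "M = max K (2 * j + 3)"
  have long: "j < length (ytr b (map \<eta> [0..<2 * j + 3]))"
    using ytr_length[of "map \<eta> [0..<2 * j + 3]" b] by simp
  have "ystream b \<eta> j = ytr b (map \<eta> [0..<2 * j + 3]) ! j"
    unfolding ystream_def ..
  also have "\<dots> = ytr b (map \<eta> [0..<M]) ! j"
    using map_upt_split[of "2 * j + 3" M \<eta>] ytr_append_nth[OF long]
    unfolding M_def by simp
  also have "\<dots> = ytr b (map \<eta> [0..<K]) ! j"
    using map_upt_split[of K M \<eta>] ytr_append_nth[OF assms] unfolding M_def by simp
  finally show ?thesis .
qed

lemma ystream_inverse: "ystream (\<not> b) (ystream b \<eta>) = \<eta>"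
proof
  fix n
  define u where "u = ytr b (map \<eta> [0..<4 * n + 7])"
  define w where "w = take (2 * n + 3) u"
  have "length (map \<eta> [0..<4 * n + 7]) \<le> 2 * length u + 1"
    unfolding u_def by (rule ytr_length)
  then have long: "2 * n + 3 \<le> length u" by simp
  have n_short: "n < length (ytr (\<not> b) w)"
    using ytr_length[of w "\<not> b"] long unfolding w_def by simp
  obtain r where r: "ytr (\<not> b) u = ytr (\<not> b) w @ r"
    using ytr_append[of "\<not> b" w "drop (2 * n + 3) u"] unfolding w_def by auto
  obtain r' where r': "map \<eta> [0..<4 * n + 7] = ytr (\<not> b) u @ r'"
    using ytr_inverse[of "map \<eta> [0..<4 * n + 7]" b] unfolding u_def by blast
  have "map (ystream b \<eta>) [0..<2 * n + 3] = w"
    by (rule nth_equalityI) (use long in \<open>simp_all add: ystream_nth u_def w_def\<close>)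
  then have "ystream (\<not> b) (ystream b \<eta>) n = ytr (\<not> b) w ! n"
    by (simp add: ystream_def)
  also have "\<dots> = ytr (\<not> b) u ! n"
    using n_short r by (simp add: nth_append)
  also have "\<dots> = map \<eta> [0..<4 * n + 7] ! n"
    using n_short r r' by (simp add: nth_append)
  also have "\<dots> = \<eta> n" by simp
  finally show "ystream (\<not> b) (ystream b \<eta>) n = \<eta> n" .
qed

lemma bij_y_at: "bij (y_at s)"
proof -
  define y_inv where
    "y_inv \<eta> = (if has_prefix s \<eta> then s @@ ystream True (sdrop (length s) \<eta>) else \<eta>)"
    for \<eta>
  have "ystream True (ystream False \<eta>) = \<eta>" "ystream False (ystream True \<eta>) = \<eta>" for \<eta>
    using ystream_inverse[of False] ystream_inverse[of True] by simp_all
  then have "y_inv \<circ> y_at s = id" "y_at s \<circ> y_inv = id"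
    by (auto simp: fun_eq_iff[of "_ \<circ> _"] y_inv_def y_at_def ymap_eq_ystream has_prefix_prepend
        sdrop_prepend prepend_sdrop)
  then show ?thesis by (rule o_bij)
qed

lemma has_prefix_y_at: "has_prefix s (y_at s \<eta>) \<longleftrightarrow> has_prefix s \<eta>"
  by (auto simp: y_at_def has_prefix_prepend)

lemma y_at_commute:
  assumes "\<And>\<eta>. \<not> (has_prefix s \<eta> \<and> has_prefix t \<eta>)"
  shows "y_at s \<circ> y_at t = y_at t \<circ> y_at s"
proof
  fix \<eta>
  show "(y_at s \<circ> y_at t) \<eta> = (y_at t \<circ> y_at s) \<eta>"
  proof (cases "has_prefix s \<eta>")
    case True
    then have "\<not> has_prefix t \<eta>" "\<not> has_prefix t (y_at s \<eta>)"
      using assms has_prefix_y_at by blast+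
    then show ?thesis by (simp add: y_at_def)
  next
    case False
    then have "\<not> has_prefix s (y_at t \<eta>)"
      using assms has_prefix_y_at by (metis y_at_def)
    then show ?thesis using False by (simp add: y_at_def)
  qed
qed

lemma y_at_conjugate:
  assumes "inj g" and g: "\<And>\<xi>. g (s @@ \<xi>) = t @@ \<xi>"
  shows "y_at t \<circ> g = g \<circ> y_at s"
proof
  fix \<eta>
  show "(y_at t \<circ> g) \<eta> = (g \<circ> y_at s) \<eta>"
  proof (cases "has_prefix s \<eta>")
    case True
    then obtain \<xi> where "\<eta> = s @@ \<xi>" by (metis prepend_sdrop)
    then show ?thesis by (simp add: g y_at_def has_prefix_prepend sdrop_prepend)
  next
    case False
    have "\<not> has_prefix t (g \<eta>)"
    proof
      assume "has_prefix t (g \<eta>)"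
      then have "g \<eta> = g (s @@ sdrop (length t) (g \<eta>))"
        by (simp add: g prepend_sdrop)
      then have "\<eta> = s @@ sdrop (length t) (g \<eta>)" using \<open>inj g\<close> by (simp add: inj_eq)
      then show False using False has_prefix_prepend by metis
    qed
    then show ?thesis using False by (simp add: y_at_def)
  qed
qed

abbreviation y_ones :: "nat \<Rightarrow> homeo" where
  "y_ones j \<equiv> y_at (replicate j True @ [False])"

lemma y_ones_commute: "i \<noteq> j \<Longrightarrow> y_ones i \<circ> y_ones j = y_ones j \<circ> y_ones i"
  by (rule y_at_commute) (metis has_prefix_ones_zero linorder_neqE_nat)

lemma bij_xmap: "bij xmap"
proof -
  define x_inv where
    "x_inv \<eta> = (if \<not> \<eta> 0 then [False, False] @@ sdrop 1 \<eta>
                 else if \<not> \<eta> 1 then [False, True] @@ sdrop 2 \<eta>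
                 else [True] @@ sdrop 2 \<eta>)" for \<eta>
  have "(x_inv \<circ> xmap) \<eta> i = \<eta> i" "(xmap \<circ> x_inv) \<eta> i = \<eta> i" for \<eta> i
    by (cases i; cases "i - 1"; auto simp: x_inv_def xmap_def prepend_def sdrop_def)+
  then have "x_inv \<circ> xmap = id" "xmap \<circ> x_inv = id" by (simp_all add: fun_eq_iff)
  then show ?thesis by (rule o_bij)
qed

lemma xmap_Cons_True: "xmap ((True # w) @@ \<xi>) = (True # True # w) @@ \<xi>"
  by (rule ext) (auto simp: xmap_def prepend_def sdrop_def nth_Cons split: nat.split)

lemma xmap_funpow_ones_zero:
  assumes "1 \<le> j"
  shows "(xmap ^^ k) ((replicate j True @ [False]) @@ \<xi>) = (replicate (j + k) True @ [False]) @@ \<xi>"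
proof (induction k)
  case (Suc k)
  obtain q where q: "j + k = Suc q" using assms by (cases "j + k") auto
  then show ?case using Suc xmap_Cons_True[of "replicate q True @ [False]"] by simp
qed simp

lemma zpow_add_one:
  assumes "bij g" shows "zpow g (a + 1) = zpow g a \<circ> g"
proof (cases "0 \<le> a")
  case True
  moreover have "nat (a + 1) = Suc (nat a)" using True by simp
  ultimately have "zpow g (a + 1) = g ^^ Suc (nat a)" "zpow g a = g ^^ nat a"
    by (simp_all add: zpow_def del: funpow.simps)
  then show ?thesis by (simp only: funpow_Suc_right)
next
  case False
  define q where "q = nat (- (a + 1))"
  have "zpow g a = inv g ^^ q \<circ> inv g" "zpow g (a + 1) = inv g ^^ q"
    using False unfolding zpow_def q_def
    by (simp_all add: funpow_Suc_right[symmetric] Suc_nat_eq_nat_zadd1)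
  then show ?thesis using bij_is_inj[OF assms] by (simp add: comp_assoc)
qed

lemma zpow_add:
  assumes "bij g" shows "zpow g (a + b) = zpow g a \<circ> zpow g b"
proof (induction b rule: int_induct[where k = 0])
  case base
  then show ?case by (simp add: zpow_def)
next
  case (step1 i)
  have "zpow g (a + (i + 1)) = zpow g (a + i) \<circ> g"
    using zpow_add_one[OF assms, of "a + i"] by (simp add: add.assoc)
  also have "\<dots> = zpow g a \<circ> zpow g (i + 1)"
    by (simp only: step1 zpow_add_one[OF assms] comp_assoc)
  finally show ?case .
next
  case (step2 i)
  have pred: "zpow g (c - 1) = zpow g c \<circ> inv g" for c
    using zpow_add_one[OF assms, of "c - 1"] bij_is_surj[OF assms]
    by (simp add: surj_iff comp_assoc)
  have "zpow g (a + (i - 1)) = zpow g (a + i) \<circ> inv g"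
    using pred[of "a + i"] by (simp add: algebra_simps)
  also have "\<dots> = zpow g a \<circ> zpow g (i - 1)"
    by (simp only: step2 pred[of i] comp_assoc)
  finally show ?case .
qed

lemma zpow_inv: "bij g \<Longrightarrow> zpow (inv g) a = zpow g (- a)"
  by (simp add: zpow_def inv_inv_eq)

lemma funpow_commute:
  assumes "f \<circ> g = g \<circ> f" shows "f ^^ n \<circ> g = g \<circ> f ^^ n"
proof (induction n)
  case (Suc n)
  have "f ^^ Suc n \<circ> g = f ^^ n \<circ> (g \<circ> f)"
    by (simp only: funpow_Suc_right comp_assoc assms)
  also have "\<dots> = g \<circ> f ^^ Suc n"
    by (simp only: funpow_Suc_right comp_assoc[symmetric] Suc.IH)
  finally show ?case .
qed simp

lemma funpow_comp_commute:
  assumes "f \<circ> g = g \<circ> f" shows "(f \<circ> g) ^^ n = f ^^ n \<circ> g ^^ n"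
proof (induction n)
  case (Suc n)
  have "g ((f ^^ n) x) = (f ^^ n) (g x)" for x
    using fun_cong[OF funpow_commute[OF assms, of n], of x] by simp
  then show ?case using Suc by (simp add: fun_eq_iff)
qed simp

lemma inv_intertwine:
  assumes "bij b" "bij b'" "b' \<circ> g = g \<circ> b" shows "inv b' \<circ> g = g \<circ> inv b"
proof
  fix x
  have "b' (g (inv b x)) = g x"
    using fun_cong[OF assms(3), of "inv b x"] surj_f_inv_f[OF bij_is_surj[OF assms(1)]] by simp
  then have "g (inv b x) = inv b' (g x)"
    by (simp add: bij_inv_eq_iff[OF assms(2)])
  then show "(inv b' \<circ> g) x = (g \<circ> inv b) x" by simp
qed

lemma zpow_comp_commute:
  assumes "bij f" "bij g" "f \<circ> g = g \<circ> f"
  shows "zpow (f \<circ> g) a = zpow f a \<circ> zpow g a"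
proof -
  have inv: "inv (f \<circ> g) = inv f \<circ> inv g" and inv_commute: "inv f \<circ> inv g = inv g \<circ> inv f"
    using o_inv_distrib[OF assms(1,2)] o_inv_distrib[OF assms(2,1)] assms(3) by simp_all
  show ?thesis
    unfolding zpow_def inv funpow_comp_commute[OF assms(3)] funpow_comp_commute[OF inv_commute]
    by simp
qed

section \<open>Membership in \<open>S\<close>\<close>

lemma gen_group_funpow: "g \<in> gen_group G \<Longrightarrow> g ^^ n \<in> gen_group G"
  by (induction n) (auto intro: gen_group.intros)

lemma gen_group_zpow: "g \<in> gen_group G \<Longrightarrow> zpow g a \<in> gen_group G"
  by (simp add: zpow_def gen_group_funpow gen_group.inverse)

lemma gen_group_conjugate:
  assumes "bij g" "g \<in> gen_group G" "c \<in> gen_group G" "c' \<circ> g = g \<circ> c"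
  shows "c' \<in> gen_group G"
proof -
  have "c' = c' \<circ> (g \<circ> inv g)"
    using bij_is_surj[OF assms(1)] by (simp add: surj_iff)
  also have "\<dots> = g \<circ> c \<circ> inv g"
    by (simp only: comp_assoc[symmetric] assms(4))
  finally have "c' = g \<circ> c \<circ> inv g" .
  then show ?thesis using assms(2,3) by (simp add: gen_group.intros)
qed

lemma xmap_in_S: "xmap \<in> S_group"
proof -
  have "x_at [] = xmap"
    by (rule ext) (simp add: x_at_def has_prefix_def prepend_def sdrop_def)
  moreover have "x_at [] \<in> T_group"
    unfolding T_group_def by (intro gen_group.gen) simp
  ultimately have "xmap \<in> T_group" by simp
  then show ?thesis
    unfolding S_group_def by (intro gen_group.gen) simp
qed

lemma y_ones_quotient_in_S: "inv (y_ones (Suc (Suc k))) \<circ> y_ones (Suc k) \<in> S_group"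
proof -
  let ?g = "xmap ^^ k"
  have bij: "bij ?g" using bij_xmap by (simp add: bij_betw_funpow)
  have "?g \<in> S_group"
    using xmap_in_S gen_group_funpow unfolding S_group_def by blast
  moreover have "inv (y_ones 2) \<circ> y_ones 1 \<in> S_group"
    unfolding S_group_def by (rule gen_group.gen) (simp add: numeral_2_eq_2)
  moreover have "(inv (y_ones (Suc (Suc k))) \<circ> y_ones (Suc k)) \<circ> ?g = ?g \<circ> (inv (y_ones 2) \<circ> y_ones 1)"
  proof -
    have conj1: "y_ones (Suc k) \<circ> ?g = ?g \<circ> y_ones 1"
      using y_at_conjugate[OF bij_is_inj[OF bij] xmap_funpow_ones_zero[of 1 k, OF le_refl]]
      by (simp add: add.commute)
    have "y_ones (Suc (Suc k)) \<circ> ?g = ?g \<circ> y_ones 2"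
      using y_at_conjugate[OF bij_is_inj[OF bij] xmap_funpow_ones_zero[of 2 k, OF one_le_numeral]]
      by (simp add: add.commute)
    then have conj2: "inv (y_ones (Suc (Suc k))) \<circ> ?g = ?g \<circ> inv (y_ones 2)"
      by (rule inv_intertwine[OF bij_y_at bij_y_at])
    show ?thesis
      by (simp only: comp_assoc conj1) (simp only: comp_assoc[symmetric] conj2)
  qed
  ultimately show ?thesis
    unfolding S_group_def using gen_group_conjugate[OF bij] by blast
qed

fun y_word :: "nat \<Rightarrow> int list \<Rightarrow> homeo" where
  "y_word m [] = id"
| "y_word m (e # es) = y_word (Suc m) es \<circ> zpow (y_ones (Suc m)) e"

lemma y_word_merge:
  "y_word m (e\<^sub>1 # e\<^sub>2 # es) =
     y_word (Suc m) ((e\<^sub>1 + e\<^sub>2) # es) \<circ> zpow (inv (y_ones (Suc (Suc m))) \<circ> y_ones (Suc m)) e\<^sub>1"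
proof -
  let ?A = "y_ones (Suc m)" and ?B = "y_ones (Suc (Suc m))"
  have "inv ?B \<circ> ?A = ?A \<circ> inv ?B"
    by (rule inv_intertwine[OF bij_y_at bij_y_at y_ones_commute]) simp
  from zpow_comp_commute[OF bij_imp_bij_inv[OF bij_y_at] bij_y_at this]
  have quotient: "zpow (inv ?B \<circ> ?A) e\<^sub>1 = zpow ?B (- e\<^sub>1) \<circ> zpow ?A e\<^sub>1"
    by (simp only: zpow_inv[OF bij_y_at])
  have "e\<^sub>2 = (e\<^sub>1 + e\<^sub>2) + - e\<^sub>1" by simp
  then have exponent_split: "zpow ?B e\<^sub>2 = zpow ?B (e\<^sub>1 + e\<^sub>2) \<circ> zpow ?B (- e\<^sub>1)"
    using zpow_add[OF bij_y_at] by metis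
  show ?thesis by (simp only: y_word.simps quotient exponent_split comp_assoc)
qed

lemma y_word_in_S: "sum_list es = 0 \<Longrightarrow> y_word m es \<in> S_group"
proof (induction es arbitrary: m rule: length_induct)
  case (1 es)
  consider "es = []" | e where "es = [e]" | e\<^sub>1 e\<^sub>2 r where "es = e\<^sub>1 # e\<^sub>2 # r"
    by (cases es; cases "tl es") auto
  then show ?case
  proof cases
    case 1
    then show ?thesis unfolding S_group_def by (simp only: y_word.simps gen_group.one)
  next
    case 2
    then have "y_word m es = id" using "1.prems" by (simp add: zpow_def)
    then show ?thesis unfolding S_group_def by (simp only: gen_group.one)
  next
    case 3
    then have "length ((e\<^sub>1 + e\<^sub>2) # r) < length es" "sum_list ((e\<^sub>1 + e\<^sub>2) # r) = 0"
      using "1.prems" by (simp_all add: add.assoc)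
    then have IH: "y_word (Suc m) ((e\<^sub>1 + e\<^sub>2) # r) \<in> S_group"
      using "1.IH" by blast
    show ?thesis
      using y_ones_quotient_in_S[of m] IH unfolding 3 y_word_merge S_group_def
      by (rule gen_group.mult[OF gen_group_zpow])
  qed
qed

lemma rprod_Cons: "rprod (g # gs) = rprod gs \<circ> g"
proof -
  have foldl_eq: "foldl (\<lambda>acc g. g \<circ> acc) a gs = rprod gs \<circ> a" for a :: homeo and gs
  proof (induction gs arbitrary: a)
    case (Cons h gs)
    have "foldl (\<lambda>acc g. g \<circ> acc) a (h # gs) = rprod gs \<circ> (h \<circ> a)"
      using Cons.IH[of "h \<circ> a"] by (simp only: foldl_Cons)
    moreover have "rprod (h # gs) = rprod gs \<circ> (h \<circ> id)"
      using Cons.IH[of "h \<circ> id"] by (simp only: rprod_def foldl_Cons)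
    ultimately show ?case by (simp only: comp_assoc comp_id)
  qed (simp add: rprod_def)
  have "rprod (g # gs) = foldl (\<lambda>acc g. g \<circ> acc) g gs"
    by (simp add: rprod_def)
  then show ?thesis by (simp only: foldl_eq)
qed

lemma rprod_eq_y_word:
  "rprod (map (\<lambda>i. zpow (y_ones (m + i)) (t i)) [1..<n + 1]) = y_word m (map t [1..<n + 1])"
proof (induction n arbitrary: m t)
  case (Suc n)
  have upt: "[1..<Suc n + 1] = 1 # map Suc [1..<n + 1]"
    by (simp add: upt_conv_Cons map_Suc_upt del: upt_Suc)
  have "rprod (map (\<lambda>i. zpow (y_ones (m + i)) (t i)) [1..<Suc n + 1]) =
      rprod (map (\<lambda>i. zpow (y_ones (Suc m + i)) ((t \<circ> Suc) i)) [1..<n + 1]) \<circ> zpow (y_ones (Suc m)) (t 1)"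
    by (simp only: upt list.map map_map rprod_Cons) (simp add: comp_def)
  also have "\<dots> = y_word m (map t [1..<Suc n + 1])"
    by (simp only: Suc.IH upt list.map map_map y_word.simps)
  finally show ?case .
qed (simp add: rprod_def)

theorem lemma6p8:
  fixes m n :: nat and s :: "nat \<Rightarrow> int"
  assumes "n \<ge> 1"
    and "(\<Sum>i = 1..n. s i) = 0"
  shows "rprod (map (\<lambda>i. zpow (y_at (replicate (m + i) True @ [False])) (s i)) [1..<n + 1])
           \<in> S_group"
proof -
  have "sum_list (map s [1..<n + 1]) = 0"
    using assms(2)
    by (simp add: interv_sum_list_conv_sum_set_nat atLeastLessThanSuc_atLeastAtMost del: upt_Suc)
  then show ?thesis unfolding rprod_eq_y_word by (rule y_word_in_S)
qed

end
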